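(* Under the hypotheses of Theorem 3.1 (namely: $\phi\in\Phi$, $f:\mathbb{R}^n\to(-\infty,+\infty]$ proper lsc, $\Omega\subseteq\mathbb{R}^n$ closed, $\delta\ge0$, $p\in[1,\infty]$, $\mathcal{J}=\{J_1,\dots,J_m\}$ a partition of $\{1,\dots,n\}$, the problem $\min_x\{\|G_{\mathcal{J},p}(x)\|_0: f(x)\le\delta,x\in\Omega\}$ has a nonempty global optimal solution set with nonzero optimal value $s^*$, and there is $\alpha>0$ with $\pi_{s^*}(G_{\mathcal{J},p}(x))\ge\alpha$ for all $x\in\Omega$ with $f(x)\le\delta$), for every $\varrho>\phi'_-(1)/\alpha$ the problem $\min_x\{\|G_{\mathcal{J},p}(x)\|_0: f(x)\le\delta,x\in\Omega\}$ has the same set of global optimal solutions as $$\textstyle\min_{x\in\mathbb{R}^n}\Big\{\varrho\sum_{i=1}^m\|x_{J_i}\|_p-\sum_{i=1}^m\psi^*(\varrho\|x_{J_i}\|_p):\ f(x)\le\delta,\ x\in\Omega\Big\}.$$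
   Context: $\Phi$ is the family of proper lsc functions $\phi:\mathbb{R}\to(-\infty,+\infty]$ with $\mathrm{int}(\mathrm{dom}\,\phi)\supseteq[0,1]$, convex on $[0,1]$, such that $\min_{t\in[0,1]}\phi(t)=0$ is attained at a (fixed) point $t^*\in[0,1)$, and $\phi(1)=1$; $\phi'_-(1)$ is the left derivative at $1$. $\psi(t)=\phi(t)$ for $t\in[0,1]$ and $\psi(t)=+\infty$ otherwise; $\psi^*(s)=\sup_{t\in\mathbb{R}}\{st-\psi(t)\}$. $G_{\mathcal{J},p}(x):=(\|x_{J_1}\|_p,\dots,\|x_{J_m}\|_p)^T$; $\|v\|_0$ counts nonzero entries; $\pi_i(v)$ is the $i$-th largest entry of $|v|$. *)

theory Defs
  imports "HOL-Analysis.Analysis"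
begin

definition lsc :: "('a::topological_space \<Rightarrow> ereal) \<Rightarrow> bool" where
  "lsc f \<longleftrightarrow> (\<forall>x. f x \<le> Liminf (at x) f)"

definition proper_fun :: "('a \<Rightarrow> ereal) \<Rightarrow> bool" where
  "proper_fun f \<longleftrightarrow> (\<forall>x. f x \<noteq> -\<infinity>) \<and> (\<exists>x. f x < \<infinity>)"

definition edom :: "('a \<Rightarrow> ereal) \<Rightarrow> 'a set" where
  "edom f = {x. f x < \<infinity>}"

text \<open>The family Phi (with the minimiser t* existentially chosen).\<close>
definition Phi_class :: "(real \<Rightarrow> ereal) \<Rightarrow> bool" where
  "Phi_class \<phi> \<longleftrightarrow> proper_fun \<phi> \<and> lsc \<phi> \<and>
     {0..1} \<subseteq> interior (edom \<phi>) \<and>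
     convex_on {0..1} (\<lambda>t. real_of_ereal (\<phi> t)) \<and>
     (\<forall>t\<in>{0..1}. 0 \<le> \<phi> t) \<and> (\<exists>ts\<in>{0..<1}. \<phi> ts = 0) \<and>
     \<phi> 1 = 1"

definition left_deriv_1 :: "(real \<Rightarrow> ereal) \<Rightarrow> ereal" where
  "left_deriv_1 \<phi> = Lim (at_left 1)
     (\<lambda>t. ereal ((real_of_ereal (\<phi> 1) - real_of_ereal (\<phi> t)) / (1 - t)))"

definition psi :: "(real \<Rightarrow> ereal) \<Rightarrow> real \<Rightarrow> ereal" where
  "psi \<phi> t = (if t \<in> {0..1} then \<phi> t else \<infinity>)"

definition psi_conj :: "(real \<Rightarrow> ereal) \<Rightarrow> real \<Rightarrow> ereal" where
  "psi_conj \<phi> s = (SUP t. ereal (s * t) - psi \<phi> t)"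

definition sub_pnorm :: "ereal \<Rightarrow> 'n set \<Rightarrow> real ^ 'n \<Rightarrow> real" where
  "sub_pnorm p J x = (if p = \<infinity> then Max ((\<lambda>j. \<bar>x $ j\<bar>) ` J)
      else (\<Sum>j\<in>J. \<bar>x $ j\<bar> powr real_of_ereal p) powr (1 / real_of_ereal p))"

text \<open>G_{J,p}(x), as a vector indexed by 0..m-1.\<close>
definition G_map :: "nat \<Rightarrow> (nat \<Rightarrow> 'n set) \<Rightarrow> ereal \<Rightarrow> real ^ 'n \<Rightarrow> nat \<Rightarrow> real" where
  "G_map m J p x = (\<lambda>i. sub_pnorm p (J i) x)"

definition l0 :: "nat \<Rightarrow> (nat \<Rightarrow> real) \<Rightarrow> nat" where
  "l0 m v = card {i. i < m \<and> v i \<noteq> 0}"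

text \<open>pi_k(v): k-th largest entry of |v| (k = 1..m).\<close>
definition pi_k :: "nat \<Rightarrow> nat \<Rightarrow> (nat \<Rightarrow> real) \<Rightarrow> real" where
  "pi_k m k v = rev (sort (map (\<lambda>i. \<bar>v i\<bar>) [0..<m])) ! (k - 1)"

definition is_partition :: "nat \<Rightarrow> (nat \<Rightarrow> 'n set) \<Rightarrow> bool" where
  "is_partition m J \<longleftrightarrow> (\<forall>i<m. J i \<noteq> {}) \<and>
     (\<forall>i<m. \<forall>k<m. i \<noteq> k \<longrightarrow> J i \<inter> J k = {}) \<and> (\<Union>i<m. J i) = UNIV"

definition gmin_set :: "'a set \<Rightarrow> ('a \<Rightarrow> 'b::linorder) \<Rightarrow> 'a set" where
  "gmin_set F g = {x \<in> F. \<forall>y\<in>F. g x \<le> g y}"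

end

theory Submission
  imports Defs
begin

text \<open>
  For \<open>s \<ge> 0\<close> the gap \<open>h(s) = s - \<psi>\<^sup>*(s)\<close> is the minimum of \<open>\<phi>(t) + s(1 - t)\<close> over
  \<open>t \<in> [0,1]\<close>. It lies in \<open>[0,1]\<close>, vanishes exactly at \<open>s = 0\<close>, and equals \<open>1\<close> as soon as
  \<open>s \<ge> \<phi>'\<^sub>-(1)\<close>, because \<open>\<phi>\<close> lies above its tangent line \<open>1 - \<phi>'\<^sub>-(1)(1 - t)\<close> at \<open>1\<close>.
  The penalised objective is \<open>\<Sum>\<^sub>i h(\<rho> \<parallel>x\<^sub>J\<^sub>i\<parallel>\<^sub>p)\<close>, which is at most \<open>\<parallel>G(x)\<parallel>\<^sub>0\<close> everywhere.
  On the feasible set at least \<open>s\<^sup>*\<close> groups have norm \<open>\<ge> \<alpha>\<close> and thus contribute exactly \<open>1\<close>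
  once \<open>\<rho>\<alpha> > \<phi>'\<^sub>-(1)\<close>; so the objective is \<open>\<ge> s\<^sup>*\<close>, and strictly so whenever
  \<open>\<parallel>G(x)\<parallel>\<^sub>0 > s\<^sup>*\<close>, since then some group contributes a value strictly between \<open>0\<close> and \<open>1\<close>
  or more than \<open>s\<^sup>*\<close> groups contribute \<open>1\<close>.
\<close>

lemma card_eq_one_le_sum_le_card_nonzero:
  fixes a :: "'i \<Rightarrow> real"
  assumes "finite I" "\<forall>i\<in>I. 0 \<le> a i \<and> a i \<le> 1"
  shows "card {i\<in>I. a i = 1} \<le> (\<Sum>i\<in>I. a i)"
    and "(\<Sum>i\<in>I. a i) \<le> card {i\<in>I. a i \<noteq> 0}"
    and "{i\<in>I. a i = 1} \<noteq> {i\<in>I. a i \<noteq> 0} \<Longrightarrow> card {i\<in>I. a i = 1} < (\<Sum>i\<in>I. a i)"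
proof -
  let ?U = "{i\<in>I. a i = 1}" and ?N = "{i\<in>I. a i \<noteq> 0}"
  have sum_U: "(\<Sum>i\<in>?U. a i) = card ?U" by (simp add: sum.cong[of _ _ a "\<lambda>_. 1"])
  have fin: "finite ?U" using assms(1) by auto
  show "card ?U \<le> (\<Sum>i\<in>I. a i)"
    unfolding sum_U[symmetric] using assms by (intro sum_mono2) auto
  have "(\<Sum>i\<in>I. a i) = (\<Sum>i\<in>?N. a i)" using assms(1) by (intro sum.mono_neutral_right) auto
  also have "\<dots> \<le> (\<Sum>i\<in>?N. 1)" using assms by (intro sum_mono) auto
  finally show "(\<Sum>i\<in>I. a i) \<le> card ?N" by simp
  assume "?U \<noteq> ?N"
  then obtain j where j: "j \<in> I" "a j \<noteq> 0" "a j \<noteq> 1" by auto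
  have "0 < a j" using j assms by force
  hence "card ?U < a j + card ?U" by simp
  also have "\<dots> = (\<Sum>i\<in>insert j ?U. a i)" using j fin by (simp add: sum_U)
  also have "\<dots> \<le> (\<Sum>i\<in>I. a i)" using assms j by (intro sum_mono2) auto
  finally show "card ?U < (\<Sum>i\<in>I. a i)" .
qed

lemma G_map_nonneg:
  assumes "is_partition m J" "i < m"
  shows "0 \<le> G_map m J p x i"
proof -
  obtain j where "j \<in> J i" using assms unfolding is_partition_def by blast
  hence "\<bar>x $ j\<bar> \<le> Max ((\<lambda>j. \<bar>x $ j\<bar>) ` J i)" by (intro Max_ge) auto
  thus ?thesis unfolding G_map_def sub_pnorm_def by (auto intro: order_trans[OF abs_ge_zero])
qed

lemma card_abs_ge_if_pi_k_ge:
  assumes k: "1 \<le> k" "k \<le> m" and pa: "\<alpha> \<le> pi_k m k v"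
  shows "k \<le> card {i. i < m \<and> \<alpha> \<le> \<bar>v i\<bar>}"
proof -
  define xs where "xs = map (\<lambda>i. \<bar>v i\<bar>) [0..<m]"
  define ys where "ys = rev (sort xs)"
  let ?P = "\<lambda>y. \<alpha> \<le> y"
  have ly: "length ys = m" by (simp add: ys_def xs_def)
  have "?P y" if "y \<in> set (take k ys)" for y
  proof -
    obtain j where j: "j < k" "y = ys ! j" using \<open>y \<in> set (take k ys)\<close> k ly
      by (auto simp: in_set_conv_nth)
    have "ys ! (k - 1) \<le> ys ! j"
      using j k ly unfolding ys_def by (simp add: rev_nth sorted_nth_mono)
    thus ?thesis using pa j by (simp add: pi_k_def ys_def xs_def)
  qed
  hence "k = length (filter ?P (take k ys))" using ly k by simp
  also have "\<dots> \<le> length (filter ?P ys)"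
    by (metis append_take_drop_id filter_append le_add1 length_append)
  also have "\<dots> = length (filter ?P xs)"
    by (metis ys_def mset_filter mset_rev mset_sort size_mset)
  also have "\<dots> = card {i. i < m \<and> \<alpha> \<le> \<bar>v i\<bar>}"
    unfolding length_filter_conv_card by (rule arg_cong[where f=card]) (auto simp: xs_def)
  finally show ?thesis .
qed

lemma gmin_set_eq_if_squeezed:
  fixes c :: "'a \<Rightarrow> nat" and F :: "'a set" and r :: "'a \<Rightarrow> real"
  assumes x0: "x0 \<in> gmin_set F c" "c x0 = s"
    and above: "\<forall>x\<in>F. r x \<le> c x"
    and below: "\<forall>x\<in>F. s \<le> r x"
    and strict: "\<forall>x\<in>F. s < c x \<longrightarrow> s < r x"
  shows "gmin_set F c = gmin_set F r"
proof -
  have c_ge: "s \<le> c x" if "x \<in> F" for x using x0 that unfolding gmin_set_def by auto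
  have "gmin_set F c = {x\<in>F. c x = s}"
    using x0 c_ge unfolding gmin_set_def by (auto intro: order.antisym)
  also have "\<dots> = gmin_set F r"
  proof (intro set_eqI iffI)
    fix x assume "x \<in> {x\<in>F. c x = s}"
    thus "x \<in> gmin_set F r" using above below unfolding gmin_set_def by force
  next
    fix x assume x: "x \<in> gmin_set F r"
    hence "r x \<le> s" using x0 above unfolding gmin_set_def by force
    thus "x \<in> {x\<in>F. c x = s}" using x strict c_ge unfolding gmin_set_def by force
  qed
  finally show ?thesis .
qed

definition conj_gap :: "(real \<Rightarrow> ereal) \<Rightarrow> real \<Rightarrow> real" where
  "conj_gap \<phi> s = s - real_of_ereal (psi_conj \<phi> s)"

context
  fixes \<phi> :: "real \<Rightarrow> ereal"
  assumes phi: "Phi_class \<phi>"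
begin

lemma Phi_finite:
  assumes "t \<in> {0..1}"
  shows "\<phi> t = ereal (real_of_ereal (\<phi> t))"
proof -
  have "t \<in> edom \<phi>" using assms phi interior_subset unfolding Phi_class_def by blast
  moreover have "0 \<le> \<phi> t" using assms phi unfolding Phi_class_def by blast
  ultimately show ?thesis by (cases "\<phi> t") (auto simp: edom_def)
qed

lemma Phi_nonneg: "t \<in> {0..1} \<Longrightarrow> 0 \<le> real_of_ereal (\<phi> t)"
  using phi unfolding Phi_class_def by (simp add: real_of_ereal_pos)

lemma Phi_one: "real_of_ereal (\<phi> 1) = 1"
  using phi unfolding Phi_class_def by simp

lemma Phi_has_zero: obtains ts where "ts \<in> {0..<1}" "real_of_ereal (\<phi> ts) = 0"
  using phi unfolding Phi_class_def by auto

lemma psi_eq_Phi: "t \<in> {0..1} \<Longrightarrow> psi \<phi> t = ereal (real_of_ereal (\<phi> t))"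
  using Phi_finite by (simp add: psi_def)

lemma slope_to_one_mono:
  assumes "0 \<le> t" "t < u" "u < 1"
  shows "(1 - real_of_ereal (\<phi> t)) / (1 - t) \<le> (1 - real_of_ereal (\<phi> u)) / (1 - u)"
proof -
  define g where "g = (\<lambda>t. real_of_ereal (\<phi> t))"
  define \<mu> where "\<mu> = (u - t) / (1 - t)"
  have \<mu>: "0 \<le> \<mu>" "\<mu> \<le> 1" "1 - \<mu> = (1 - u) / (1 - t)"
    using assms by (auto simp: \<mu>_def field_simps)
  have "\<mu> * (1 - t) = u - t" using assms by (simp add: \<mu>_def)
  hence "(1 - \<mu>) *\<^sub>R t + \<mu> *\<^sub>R 1 = u" by (simp add: algebra_simps)
  moreover have "convex_on {0..1} g" using phi unfolding Phi_class_def g_def by blast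
  ultimately have "g u \<le> (1 - \<mu>) * g t + \<mu> * g 1"
    using convex_onD[OF _ \<mu>(1,2), of _ g t 1] assms by auto
  hence "(1 - \<mu>) * (1 - g t) \<le> 1 - g u"
    using Phi_one by (simp add: g_def algebra_simps)
  hence "(1 - u) / (1 - t) * (1 - g t) \<le> 1 - g u" by (simp only: \<mu>(3))
  thus ?thesis using assms by (simp add: g_def field_simps)
qed

lemma left_deriv_1_eq_SUP:
  "left_deriv_1 \<phi> = (SUP t\<in>{0..<1}. ereal ((1 - real_of_ereal (\<phi> t)) / (1 - t)))"
    (is "_ = ?S")
proof -
  let ?q = "\<lambda>t. ereal ((1 - real_of_ereal (\<phi> t)) / (1 - t))"
  have "(?q \<longlongrightarrow> ?S) (at_left 1)"
  proof (rule order_tendstoI)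
    fix a assume "a < ?S"
    then obtain u where u: "u \<in> {0..<1}" "a < ?q u" by (auto simp: less_SUP_iff)
    have "\<forall>\<^sub>F x in at_left 1. x \<in> {u<..<1}" using u by (intro eventually_at_left_real) auto
    thus "\<forall>\<^sub>F x in at_left 1. a < ?q x"
      by eventually_elim (use u slope_to_one_mono[of u] in \<open>auto intro: less_le_trans\<close>)
  next
    fix a assume "?S < a"
    have "\<forall>\<^sub>F x in at_left 1. x \<in> {0<..<(1::real)}" by (intro eventually_at_left_real) auto
    thus "\<forall>\<^sub>F x in at_left 1. ?q x < a"
    proof eventually_elim
      case (elim x)
      have "?q x \<le> ?S" using elim by (intro SUP_upper) auto
      thus ?case using \<open>?S < a\<close> by order
    qed
  qed
  thus ?thesis unfolding left_deriv_1_def using Phi_one by (simp add: tendsto_Lim)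
qed

lemma slope_to_one_le_left_deriv_1:
  "t \<in> {0..<1} \<Longrightarrow> ereal ((1 - real_of_ereal (\<phi> t)) / (1 - t)) \<le> left_deriv_1 \<phi>"
  unfolding left_deriv_1_eq_SUP by (rule SUP_upper)

lemma left_deriv_1_pos: "0 < left_deriv_1 \<phi>"
proof -
  obtain ts where ts: "ts \<in> {0..<1}" "real_of_ereal (\<phi> ts) = 0" by (rule Phi_has_zero)
  hence "ereal (1 / (1 - ts)) \<le> left_deriv_1 \<phi>"
    using slope_to_one_le_left_deriv_1[of ts] by simp
  moreover have "0 < ereal (1 / (1 - ts))" using ts by simp
  ultimately show ?thesis by order
qed

lemma Phi_ge_tangent_at_one:
  assumes d: "left_deriv_1 \<phi> = ereal d" and t: "t \<in> {0..1}"
  shows "1 - d * (1 - t) \<le> real_of_ereal (\<phi> t)"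
proof (cases "t = 1")
  case True thus ?thesis using Phi_one by simp
next
  case False
  with t have "t \<in> {0..<1}" by auto
  hence "(1 - real_of_ereal (\<phi> t)) / (1 - t) \<le> d"
    using slope_to_one_le_left_deriv_1[of t] d by simp
  with \<open>t \<in> {0..<1}\<close> show ?thesis by (simp add: divide_le_eq algebra_simps)
qed

lemma psi_conj_le:
  assumes "\<forall>t\<in>{0..1}. s * t - real_of_ereal (\<phi> t) \<le> B"
  shows "psi_conj \<phi> s \<le> ereal B"
  unfolding psi_conj_def
proof (rule SUP_least)
  fix t :: real
  show "ereal (s * t) - psi \<phi> t \<le> ereal B"
  proof (cases "t \<in> {0..1}")
    case True thus ?thesis using assms by (simp add: psi_eq_Phi)
  next
    case False hence "psi \<phi> t = \<infinity>" unfolding psi_def by (simp only: if_False)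
    thus ?thesis by simp
  qed
qed

lemma psi_conj_ge: "t \<in> {0..1} \<Longrightarrow> ereal (s * t - real_of_ereal (\<phi> t)) \<le> psi_conj \<phi> s"
  unfolding psi_conj_def by (rule SUP_upper2[of t]) (auto simp: psi_eq_Phi)

lemma psi_conj_eq_conj_gap:
  assumes "0 \<le> s"
  shows "psi_conj \<phi> s = ereal (s - conj_gap \<phi> s)"
proof -
  have "ereal (s - 1) \<le> psi_conj \<phi> s" using psi_conj_ge[of 1 s] Phi_one by simp
  moreover have "psi_conj \<phi> s \<le> ereal s"
  proof (intro psi_conj_le ballI)
    fix t :: real assume t: "t \<in> {0..1}"
    have "s * t \<le> s" using assms t by (simp add: mult_left_le)
    thus "s * t - real_of_ereal (\<phi> t) \<le> s" using Phi_nonneg[OF t] by linarith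
  qed
  ultimately show ?thesis by (cases "psi_conj \<phi> s") (auto simp: conj_gap_def)
qed

lemma conj_gap_le: "0 \<le> s \<Longrightarrow> t \<in> {0..1} \<Longrightarrow> conj_gap \<phi> s \<le> real_of_ereal (\<phi> t) + s * (1 - t)"
  using psi_conj_ge[of t s] psi_conj_eq_conj_gap[of s] by (simp add: algebra_simps)

lemma conj_gap_ge:
  assumes "0 \<le> s" "\<forall>t\<in>{0..1}. B \<le> real_of_ereal (\<phi> t) + s * (1 - t)"
  shows "B \<le> conj_gap \<phi> s"
proof -
  have "psi_conj \<phi> s \<le> ereal (s - B)"
    using assms(2) by (intro psi_conj_le) (auto simp: algebra_simps)
  thus ?thesis using psi_conj_eq_conj_gap[OF assms(1)] by simp
qed

lemma conj_gap_nonneg: "0 \<le> s \<Longrightarrow> 0 \<le> conj_gap \<phi> s"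
  using Phi_nonneg by (intro conj_gap_ge) auto

lemma conj_gap_le_one: "0 \<le> s \<Longrightarrow> conj_gap \<phi> s \<le> 1"
  using conj_gap_le[of s 1] Phi_one by simp

lemma conj_gap_zero: "conj_gap \<phi> 0 = 0"
proof -
  obtain ts where "ts \<in> {0..<1}" "real_of_ereal (\<phi> ts) = 0" by (rule Phi_has_zero)
  thus ?thesis using conj_gap_le[of 0 ts] conj_gap_nonneg[of 0] by simp
qed

lemma conj_gap_pos:
  assumes d: "left_deriv_1 \<phi> = ereal d" and s: "0 < s"
  shows "0 < conj_gap \<phi> s"
proof -
  have "0 < d" using left_deriv_1_pos d by simp
  \<comment> \<open>where \<open>d(1 - t) \<le> 1/2\<close> the tangent line keeps \<open>\<phi> t \<ge> 1/2\<close>; elsewhere \<open>s(1 - t) \<ge> s/(2d)\<close>\<close>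
  have "min (1/2) (s / (2 * d)) \<le> real_of_ereal (\<phi> t) + s * (1 - t)" if t: "t \<in> {0..1}" for t
  proof (cases "d * (1 - t) \<le> 1/2")
    case True
    thus ?thesis using Phi_ge_tangent_at_one[OF d t] t s by (auto intro: add_increasing2)
  next
    case False
    hence "1 / (2 * d) \<le> 1 - t" using \<open>0 < d\<close> by (simp add: field_simps)
    hence "s / (2 * d) \<le> s * (1 - t)" using mult_left_mono[of _ _ s] s by fastforce
    thus ?thesis using Phi_nonneg[OF t] by linarith
  qed
  hence "min (1/2) (s / (2 * d)) \<le> conj_gap \<phi> s" using s by (intro conj_gap_ge) auto
  moreover have "0 < min (1/2) (s / (2 * d))" using \<open>0 < d\<close> s by simp
  ultimately show ?thesis by linarith
qed

lemma conj_gap_eq_one: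
  assumes d: "left_deriv_1 \<phi> = ereal d" and "d \<le> s"
  shows "conj_gap \<phi> s = 1"
proof -
  have "0 \<le> s" using left_deriv_1_pos d assms(2) by simp
  have "1 \<le> real_of_ereal (\<phi> t) + s * (1 - t)" if "t \<in> {0..1}" for t
    using Phi_ge_tangent_at_one[OF d that] mult_right_mono[OF assms(2), of "1 - t"] that by simp
  hence "1 \<le> conj_gap \<phi> s" using \<open>0 \<le> s\<close> by (intro conj_gap_ge) auto
  thus ?thesis using conj_gap_le_one[OF \<open>0 \<le> s\<close>] by simp
qed

lemma sum_minus_sum_psi_conj:
  assumes "\<forall>i\<in>I. 0 \<le> s i"
  shows "ereal (\<Sum>i\<in>I. s i) - (\<Sum>i\<in>I. psi_conj \<phi> (s i)) = ereal (\<Sum>i\<in>I. conj_gap \<phi> (s i))"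
proof -
  have "(\<Sum>i\<in>I. psi_conj \<phi> (s i)) = (\<Sum>i\<in>I. ereal (s i - conj_gap \<phi> (s i)))"
    using assms by (intro sum.cong) (auto simp: psi_conj_eq_conj_gap)
  also have "\<dots> = ereal (\<Sum>i\<in>I. s i - conj_gap \<phi> (s i))" by (rule sum_ereal)
  finally show ?thesis by (simp add: sum_subtractf)
qed

lemma left_deriv_1_real_if_less:
  assumes "left_deriv_1 \<phi> < ereal c"
  obtains d where "left_deriv_1 \<phi> = ereal d" "0 < d" "d < c"
  using assms left_deriv_1_pos by (cases "left_deriv_1 \<phi>") auto

lemma sum_conj_gap_bounds:
  assumes d: "left_deriv_1 \<phi> = ereal d" "d \<le> \<rho> * \<alpha>" and "0 < \<rho>"
    and v: "\<forall>i<m. 0 \<le> v i"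
    and k: "k \<le> card {i. i < m \<and> \<alpha> \<le> \<bar>v i\<bar>}"
  shows "(\<Sum>i<m. conj_gap \<phi> (\<rho> * v i)) \<le> l0 m v"
    and "k \<le> (\<Sum>i<m. conj_gap \<phi> (\<rho> * v i))"
    and "k < l0 m v \<Longrightarrow> k < (\<Sum>i<m. conj_gap \<phi> (\<rho> * v i))"
proof -
  define a where "a i = conj_gap \<phi> (\<rho> * v i)" for i
  have "\<forall>i\<in>{..<m}. 0 \<le> a i \<and> a i \<le> 1"
    using v \<open>0 < \<rho>\<close> by (auto simp: a_def conj_gap_nonneg conj_gap_le_one)
  note bounds = card_eq_one_le_sum_le_card_nonzero[OF finite_lessThan this]
  have "{i\<in>{..<m}. a i \<noteq> 0} = {i. i < m \<and> v i \<noteq> 0}"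
    using v \<open>0 < \<rho>\<close> conj_gap_pos[OF d(1)] by (force simp: a_def conj_gap_zero less_le)
  hence l0_eq: "l0 m v = card {i\<in>{..<m}. a i \<noteq> 0}" unfolding l0_def by simp
  have "a i = 1" if "i < m" "\<alpha> \<le> v i" for i
    using d \<open>0 < \<rho>\<close> that unfolding a_def by (intro conj_gap_eq_one[OF d(1)]) (auto intro: order_trans)
  hence "card {i. i < m \<and> \<alpha> \<le> \<bar>v i\<bar>} \<le> card {i\<in>{..<m}. a i = 1}"
    using v by (intro card_mono) auto
  hence ones: "k \<le> card {i\<in>{..<m}. a i = 1}" using k by linarith
  show "(\<Sum>i<m. conj_gap \<phi> (\<rho> * v i)) \<le> l0 m v"
    using bounds(2) l0_eq by (simp add: a_def)
  show "k \<le> (\<Sum>i<m. conj_gap \<phi> (\<rho> * v i))"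
    using bounds(1) ones by (simp add: a_def)
  assume "k < l0 m v"
  thus "k < (\<Sum>i<m. conj_gap \<phi> (\<rho> * v i))"
    using bounds ones l0_eq unfolding a_def[symmetric]
    by (cases "{i\<in>{..<m}. a i = 1} = {i\<in>{..<m}. a i \<noteq> 0}") force+
qed

end

theorem corollary3p1:
  fixes \<phi> :: "real \<Rightarrow> ereal" and f :: "real ^ 'n \<Rightarrow> ereal"
    and \<Omega> :: "(real ^ 'n) set" and \<delta> :: real and p :: ereal
    and m :: nat and J :: "nat \<Rightarrow> 'n set" and s :: nat and \<alpha> :: real
  assumes phi: "Phi_class \<phi>"
    and f_proper: "proper_fun f" and f_lsc: "lsc f"
    and Omega_closed: "closed \<Omega>"
    and delta: "\<delta> \<ge> 0"
    and p: "1 \<le> p"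
    and part: "is_partition m J"
    and opt: "\<exists>x\<in>{x. f x \<le> ereal \<delta> \<and> x \<in> \<Omega>}.
                x \<in> gmin_set {x. f x \<le> ereal \<delta> \<and> x \<in> \<Omega>} (\<lambda>x. l0 m (G_map m J p x))
                \<and> l0 m (G_map m J p x) = s"
    and s_nz: "s \<noteq> 0"
    and alpha: "\<alpha> > 0"
    and alpha_bd: "\<forall>x. f x \<le> ereal \<delta> \<and> x \<in> \<Omega> \<longrightarrow> pi_k m s (G_map m J p x) \<ge> \<alpha>"
  shows "\<forall>\<rho>::real. ereal \<rho> > left_deriv_1 \<phi> / ereal \<alpha> \<longrightarrow>
           gmin_set {x. f x \<le> ereal \<delta> \<and> x \<in> \<Omega>} (\<lambda>x. l0 m (G_map m J p x)) =
           gmin_set {x. f x \<le> ereal \<delta> \<and> x \<in> \<Omega>}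
             (\<lambda>x. ereal (\<rho> * (\<Sum>i<m. sub_pnorm p (J i) x))
                   - (\<Sum>i<m. psi_conj \<phi> (\<rho> * sub_pnorm p (J i) x)))"
proof (intro allI impI)
  fix \<rho> :: real assume "left_deriv_1 \<phi> / ereal \<alpha> < ereal \<rho>"
  hence "left_deriv_1 \<phi> < ereal (\<rho> * \<alpha>)" using alpha by (simp add: ereal_divide_less_iff)
  then obtain d where d: "left_deriv_1 \<phi> = ereal d" "0 < d" "d < \<rho> * \<alpha>"
    by (rule left_deriv_1_real_if_less[OF phi])
  have "0 < \<rho>" using d alpha zero_less_mult_pos2[of \<rho> \<alpha>] by linarith
  define F where "F = {x. f x \<le> ereal \<delta> \<and> x \<in> \<Omega>}"
  have G_nonneg: "\<forall>i<m. 0 \<le> G_map m J p x i" for x using G_map_nonneg[OF part] by blast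
  obtain x0 where x0: "x0 \<in> gmin_set F (\<lambda>x. l0 m (G_map m J p x))" "l0 m (G_map m J p x0) = s"
    using opt unfolding F_def by blast
  have "s \<le> m"
    using x0(2) card_mono[of "{..<m}" "{i. i < m \<and> G_map m J p x0 i \<noteq> 0}"] by (auto simp: l0_def)
  have "s \<le> card {i. i < m \<and> \<alpha> \<le> \<bar>G_map m J p x i\<bar>}" if "x \<in> F" for x
    using alpha_bd that s_nz \<open>s \<le> m\<close> by (intro card_abs_ge_if_pi_k_ge) (auto simp: F_def)
  note bounds = sum_conj_gap_bounds[OF phi d(1) less_imp_le[OF d(3)] \<open>0 < \<rho>\<close> G_nonneg this]
  have "gmin_set F (\<lambda>x. l0 m (G_map m J p x)) =
      gmin_set F (\<lambda>x. \<Sum>i<m. conj_gap \<phi> (\<rho> * G_map m J p x i))"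
    by (rule gmin_set_eq_if_squeezed[OF x0]) (use bounds in auto)
  moreover have "ereal (\<rho> * (\<Sum>i<m. sub_pnorm p (J i) x)) - (\<Sum>i<m. psi_conj \<phi> (\<rho> * sub_pnorm p (J i) x))
      = ereal (\<Sum>i<m. conj_gap \<phi> (\<rho> * G_map m J p x i))" for x
    using sum_minus_sum_psi_conj[OF phi, of "{..<m}" "\<lambda>i. \<rho> * G_map m J p x i"] G_nonneg \<open>0 < \<rho>\<close>
    by (simp add: G_map_def sum_distrib_left)
  ultimately show "gmin_set {x. f x \<le> ereal \<delta> \<and> x \<in> \<Omega>} (\<lambda>x. l0 m (G_map m J p x)) =
           gmin_set {x. f x \<le> ereal \<delta> \<and> x \<in> \<Omega>}
             (\<lambda>x. ereal (\<rho> * (\<Sum>i<m. sub_pnorm p (J i) x))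
                   - (\<Sum>i<m. psi_conj \<phi> (\<rho> * sub_pnorm p (J i) x)))"
    by (simp add: F_def gmin_set_def)
qed

end
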